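(* A sequence $(a_n(q))_{n\ge1}$ in $\mathbb{Z}[q]$ is a $q$-Gauss sequence if and only if there exists a sequence $(g_n(q))_{n\ge1}$ in $\mathbb{Z}[q]$ such that $a_n(q)=\sum_{d\mid n}\left[\tfrac{n}{d}\right]_{q^d}g_{n/d}(q^d)$ for all $n\ge1$.
   Context: $\mu$ is the Möbius function; $[k]_{x}=1+x+\dots+x^{k-1}$, so $[k]_{q^d}=1+q^d+\dots+q^{d(k-1)}$ and $[n]_q=1+q+\dots+q^{n-1}$. A sequence $(a_n(q))$ in $\mathbb{Z}[q]$ is a $q$-Gauss sequence if $[n]_q$ divides $\sum_{d\mid n}\mu(d)a_{n/d}(q^d)$ in $\mathbb{Z}[q]$ for all $n\ge1$. *)

theory Defs
  imports "HOL-Computational_Algebra.Computational_Algebra"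
begin

definition moebius_mu :: "nat \<Rightarrow> int" where
  "moebius_mu n = (if squarefree n then (-1) ^ card (prime_factors n) else 0)"

definition qint :: "nat \<Rightarrow> 'a::comm_semiring_1 \<Rightarrow> 'a" where
  "qint k x = (\<Sum>i<k. x ^ i)"

definition subst_pow :: "int poly \<Rightarrow> nat \<Rightarrow> int poly" where
  "subst_pow p d = pcompose p (monom 1 d)"

definition q_gauss :: "(nat \<Rightarrow> int poly) \<Rightarrow> bool" where
  "q_gauss a \<longleftrightarrow> (\<forall>n\<ge>1. qint n [:0, 1:] dvd
      (\<Sum>d | d dvd n. smult (moebius_mu d) (subst_pow (a (n div d)) d)))"

end

theory Submission
  imports Defs
begin

(* Write s_d for the substitution q := q^d.  Because s_d (s_e p) = s_(d e), the classical proof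
   of Moebius inversion goes through for twisted divisor sums: a_n = sum_(d|n) s_d (h_(n/d)) for
   all n iff h_n = sum_(d|n) mu(d) s_d (a_(n/d)) for all n.  Hence a is q-Gauss iff this inverse
   transform has the form h_n = [n]_q g_n, and s_d ([k]_q g_k) = [k]_(q^d) s_d (g_k) turns the
   twisted divisor sum of h into the stated formula. *)

lemma prod_prime_factors_dvd: "\<Prod>(prime_factors n) dvd (n :: nat)"
proof (cases "n = 0")
  case False
  have "(\<Prod>p\<in>prime_factors n. p) dvd (\<Prod>p\<in>prime_factors n. p ^ multiplicity p n)"
    by (intro prod_dvd_prod dvd_power) (auto simp: prime_factors_multiplicity)
  with False show ?thesis by (simp add: prod_prime_factors)
qed simp

lemma prime_factors_prod_primes:
  assumes "finite S" "\<And>p. p \<in> S \<Longrightarrow> prime (p :: nat)"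
  shows "prime_factors (\<Prod>S) = S"
proof -
  have "0 \<notin> S" using assms(2) not_prime_0 by blast
  with assms show ?thesis by (subst prime_factors_prod) (auto simp: prime_prime_factors)
qed

lemma squarefree_prod_primes:
  assumes "\<And>p. p \<in> S \<Longrightarrow> prime (p :: nat)"
  shows "squarefree (\<Prod>S)"
  using assms by (intro squarefree_prod_coprime) (auto intro: primes_coprime squarefree_prime)

lemma prod_prime_factors_squarefree:
  assumes "squarefree (n :: nat)"
  shows "\<Prod>(prime_factors n) = n"
proof -
  have "n \<noteq> 0" by (rule ccontr) (use assms in simp)
  with assms have "(\<Prod>p\<in>prime_factors n. p ^ multiplicity p n) = \<Prod>(prime_factors n)"
    by (simp add: squarefree_factorial_semiring')
  then show ?thesis by (simp add: prod_prime_factors[OF \<open>n \<noteq> 0\<close>])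
qed

lemma bij_betw_prime_factors_squarefree_divisors:
  assumes "n > (0 :: nat)"
  shows "bij_betw prime_factors {d. d dvd n \<and> squarefree d} (Pow (prime_factors n))"
proof (rule bij_betw_byWitness[where f' = Prod])
  have "prime_factors d \<subseteq> prime_factors n" if "d dvd n" for d
    using assms that by (intro dvd_prime_factors) auto
  then show "prime_factors ` {d. d dvd n \<and> squarefree d} \<subseteq> Pow (prime_factors n)"
    by blast
  show "Prod ` Pow (prime_factors n) \<subseteq> {d. d dvd n \<and> squarefree d}"
  proof clarify
    fix S assume S: "S \<subseteq> prime_factors n"
    have "\<Prod>S dvd \<Prod>(prime_factors n)" using S by (intro prod_dvd_prod_subset) auto
    then show "\<Prod>S dvd n \<and> squarefree (\<Prod>S)"
      using S prod_prime_factors_dvd[of n] by (auto intro: dvd_trans squarefree_prod_primes)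
  qed
qed (auto simp: prod_prime_factors_squarefree intro!: prime_factors_prod_primes
          intro: finite_subset)

lemma sum_moebius_mu_divisors:
  assumes "n > 0"
  shows "(\<Sum>d | d dvd n. moebius_mu d) = (if n = 1 then 1 else 0)"
proof -
  have "(\<Sum>d | d dvd n. moebius_mu d)
      = (\<Sum>d | d dvd n \<and> squarefree d. (-1) ^ card (prime_factors d))"
    using assms by (intro sum.mono_neutral_cong_right) (auto simp: moebius_mu_def)
  also have "\<dots> = (\<Sum>S\<in>Pow (prime_factors n). (-1) ^ card S)"
    using bij_betw_prime_factors_squarefree_divisors[OF assms] by (rule sum.reindex_bij_betw)
  also have "\<dots> = 0 ^ card (prime_factors n)"
    using prod_diff_conv_sum[of "prime_factors n" "\<lambda>_. 1 :: int" "\<lambda>_. 1"] by simp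
  also have "\<dots> = (if n = 1 then 1 else 0)"
    using assms by (auto simp: card_gt_0_iff prime_factorization_empty_iff)
  finally show ?thesis .
qed

lemma sum_divisors_nested:
  fixes F :: "nat \<Rightarrow> nat \<Rightarrow> 'a::comm_monoid_add"
  assumes "n > 0"
  shows "(\<Sum>d | d dvd n. \<Sum>e | e dvd n div d. F d e) = (\<Sum>m | m dvd n. \<Sum>d | d dvd m. F d (m div d))"
proof -
  have "(\<Sum>d | d dvd n. \<Sum>e | e dvd n div d. F d e)
      = (\<Sum>(d, e) \<in> (SIGMA d:{d. d dvd n}. {e. e dvd n div d}). F d e)"
    using assms by (intro sum.Sigma) (auto simp: dvd_div_eq_0_iff)
  also have "\<dots> = (\<Sum>(m, d) \<in> (SIGMA m:{m. m dvd n}. {d. d dvd m}). F d (m div d))"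
    using assms
    by (intro sum.reindex_bij_witness[where i = "\<lambda>(m, d). (d, m div d)" and j = "\<lambda>(d, e). (d * e, d)"])
       (auto simp: dvd_div_iff_mult mult.commute intro: dvd_trans)
  also have "\<dots> = (\<Sum>m | m dvd n. \<Sum>d | d dvd m. F d (m div d))"
    using assms by (intro sum.Sigma[symmetric]) (auto intro: dvd_pos_nat)
  finally show ?thesis .
qed

lemma sum_divisors_flip:
  fixes n :: nat
  assumes "n > 0"
  shows "(\<Sum>d | d dvd n. f (n div d)) = (\<Sum>d | d dvd n. f d)"
  using assms by (intro sum.reindex_bij_witness[of _ "(div) n" "(div) n"]) auto

lemma smult_sum_right: "smult c (\<Sum>i\<in>A. f i) = (\<Sum>i\<in>A. smult c (f i))"
  by (induction A rule: infinite_finite_induct) (simp_all add: smult_add_right)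

lemma pcompose_power: "pcompose (p ^ k) q = pcompose p q ^ k"
  by (induction k) (simp_all add: pcompose_mult pcompose_1)

lemma subst_pow_sum: "subst_pow (\<Sum>i\<in>A. f i) d = (\<Sum>i\<in>A. subst_pow (f i) d)"
  unfolding subst_pow_def by (rule pcompose_sum)

lemma subst_pow_smult: "subst_pow (smult c p) d = smult c (subst_pow p d)"
  unfolding subst_pow_def by (rule pcompose_smult)

lemma subst_pow_mult: "subst_pow (p * q) d = subst_pow p d * subst_pow q d"
  unfolding subst_pow_def by (rule pcompose_mult)

lemma subst_pow_X: "subst_pow [:0, 1:] d = monom 1 d"
  by (simp add: subst_pow_def pcompose_pCons)

lemma subst_pow_qint: "subst_pow (qint k p) d = qint k (subst_pow p d)"
  by (simp add: qint_def subst_pow_def pcompose_sum pcompose_power)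

lemma subst_pow_Suc_0: "subst_pow p (Suc 0) = p"
  by (simp add: subst_pow_def monom_altdef)

lemma subst_pow_subst_pow: "subst_pow (subst_pow p e) d = subst_pow p (d * e)"
proof -
  have "pcompose (monom 1 e) (monom 1 d) = (monom 1 (d * e) :: int poly)"
    by (simp add: monom_altdef pcompose_power pcompose_pCons flip: power_mult)
  then show ?thesis by (simp add: subst_pow_def flip: pcompose_assoc)
qed

definition divisor_subst_sum :: "(nat \<Rightarrow> int poly) \<Rightarrow> nat \<Rightarrow> int poly" where
  "divisor_subst_sum h n = (\<Sum>d | d dvd n. subst_pow (h (n div d)) d)"

definition moebius_subst_sum :: "(nat \<Rightarrow> int poly) \<Rightarrow> nat \<Rightarrow> int poly" where
  "moebius_subst_sum a n = (\<Sum>d | d dvd n. smult (moebius_mu d) (subst_pow (a (n div d)) d))"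

lemma divisor_subst_sum_cong:
  assumes "\<And>k. k > 0 \<Longrightarrow> a k = b k" "n > 0"
  shows "divisor_subst_sum a n = divisor_subst_sum b n"
  unfolding divisor_subst_sum_def using assms by (intro sum.cong refl) (auto elim!: dvdE)

lemma moebius_subst_sum_cong:
  assumes "\<And>k. k > 0 \<Longrightarrow> a k = b k" "n > 0"
  shows "moebius_subst_sum a n = moebius_subst_sum b n"
  unfolding moebius_subst_sum_def using assms by (intro sum.cong refl) (auto elim!: dvdE)

lemma sum_divisors_subst_pow_regroup:
  assumes "n > 0"
  shows "(\<Sum>d | d dvd n. \<Sum>e | e dvd n div d. smult (c d e) (subst_pow (h (n div d div e)) (d * e)))
       = (\<Sum>m | m dvd n. smult (\<Sum>d | d dvd m. c d (m div d)) (subst_pow (h (n div m)) m))"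
proof -
  have "(\<Sum>d | d dvd n. \<Sum>e | e dvd n div d. smult (c d e) (subst_pow (h (n div d div e)) (d * e)))
      = (\<Sum>m | m dvd n. \<Sum>d | d dvd m.
           smult (c d (m div d)) (subst_pow (h (n div d div (m div d))) (d * (m div d))))"
    by (rule sum_divisors_nested[OF assms])
  also have "\<dots> = (\<Sum>m | m dvd n. smult (\<Sum>d | d dvd m. c d (m div d)) (subst_pow (h (n div m)) m))"
    unfolding smult_sum by (intro sum.cong refl) (auto simp: div_div_div_same)
  finally show ?thesis .
qed

lemma moebius_subst_sum_divisor_subst_sum:
  assumes "n > 0"
  shows "moebius_subst_sum (divisor_subst_sum h) n = h n"
proof -
  have "moebius_subst_sum (divisor_subst_sum h) n
      = (\<Sum>d | d dvd n. \<Sum>e | e dvd n div d.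
           smult (moebius_mu d) (subst_pow (h (n div d div e)) (d * e)))"
    by (simp add: moebius_subst_sum_def divisor_subst_sum_def subst_pow_sum smult_sum_right
        subst_pow_subst_pow)
  also have "\<dots> = (\<Sum>m | m dvd n. smult (\<Sum>d | d dvd m. moebius_mu d) (subst_pow (h (n div m)) m))"
    by (rule sum_divisors_subst_pow_regroup[OF assms])
  also have "\<dots> = (\<Sum>m | m dvd n. if m = 1 then h n else 0)"
    using assms by (intro sum.cong refl) (auto simp: sum_moebius_mu_divisors subst_pow_Suc_0 dvd_pos_nat)
  also have "\<dots> = h n"
    using assms by simp
  finally show ?thesis .
qed

lemma divisor_subst_sum_moebius_subst_sum:
  assumes "n > 0"
  shows "divisor_subst_sum (moebius_subst_sum a) n = a n"
proof -
  have "divisor_subst_sum (moebius_subst_sum a) n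
      = (\<Sum>d | d dvd n. \<Sum>e | e dvd n div d.
           smult (moebius_mu e) (subst_pow (a (n div d div e)) (d * e)))"
    by (simp add: moebius_subst_sum_def divisor_subst_sum_def subst_pow_sum subst_pow_smult
        subst_pow_subst_pow)
  also have "\<dots> = (\<Sum>m | m dvd n. smult (\<Sum>d | d dvd m. moebius_mu (m div d)) (subst_pow (a (n div m)) m))"
    by (rule sum_divisors_subst_pow_regroup[OF assms])
  also have "\<dots> = (\<Sum>m | m dvd n. if m = 1 then a n else 0)"
    using assms
    by (intro sum.cong refl) (auto simp: sum_divisors_flip sum_moebius_mu_divisors subst_pow_Suc_0 dvd_pos_nat)
  also have "\<dots> = a n"
    using assms by simp
  finally show ?thesis .
qed

lemma moebius_inversion_subst_pow:
  "(\<forall>n>0. a n = divisor_subst_sum h n) \<longleftrightarrow> (\<forall>n>0. moebius_subst_sum a n = h n)"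
proof safe
  fix n :: nat assume "\<forall>n>0. a n = divisor_subst_sum h n" "n > 0"
  then have "moebius_subst_sum a n = moebius_subst_sum (divisor_subst_sum h) n"
    by (intro moebius_subst_sum_cong) auto
  with \<open>n > 0\<close> show "moebius_subst_sum a n = h n"
    by (simp add: moebius_subst_sum_divisor_subst_sum)
next
  fix n :: nat assume "\<forall>n>0. moebius_subst_sum a n = h n" "n > 0"
  then have "divisor_subst_sum h n = divisor_subst_sum (moebius_subst_sum a) n"
    by (intro divisor_subst_sum_cong) auto
  with \<open>n > 0\<close> show "a n = divisor_subst_sum h n"
    by (simp add: divisor_subst_sum_moebius_subst_sum)
qed

theorem mainTheorem13:
  fixes a :: "nat \<Rightarrow> int poly"
  shows "q_gauss a \<longleftrightarrow>
    (\<exists>g :: nat \<Rightarrow> int poly. \<forall>n\<ge>1.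
       a n = (\<Sum>d | d dvd n. qint (n div d) (monom 1 d) * subst_pow (g (n div d)) d))"
proof -
  let ?X = "[:0, 1:] :: int poly"
  have "q_gauss a \<longleftrightarrow> (\<forall>n>0. qint n ?X dvd moebius_subst_sum a n)"
    by (simp add: q_gauss_def moebius_subst_sum_def Suc_le_eq)
  also have "\<dots> \<longleftrightarrow> (\<exists>g. \<forall>n>0. moebius_subst_sum a n = qint n ?X * g n)"
    unfolding dvd_def by metis
  also have "\<dots> \<longleftrightarrow> (\<exists>g. \<forall>n>0. a n = divisor_subst_sum (\<lambda>k. qint k ?X * g k) n)"
    by (simp add: moebius_inversion_subst_pow)
  also have "\<dots> \<longleftrightarrow> (\<exists>g. \<forall>n\<ge>1.
       a n = (\<Sum>d | d dvd n. qint (n div d) (monom 1 d) * subst_pow (g (n div d)) d))"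
    by (simp add: divisor_subst_sum_def subst_pow_mult subst_pow_qint subst_pow_X Suc_le_eq)
  finally show ?thesis .
qed

end
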